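(* Let $\alpha\in(0,1)$, $R>0$, and for $\lambda\in[-\pi,\pi]$ let $V(\lambda)$ denote the maximal Phase-II observation time when at the contact time $t_2$ the target is on the boundary of the observation disk with relative bearing $\lambda$. Then $V$ is monotonically non-decreasing on $[-\pi,0]$, monotonically non-increasing on $[0,\pi]$, and attains its maximum at $\lambda=0$.
   Context: Target: position $(0,y_T(t))$, $\dot y_T=1$. Observer: position $(x_O(t),y_O(t))$, $\dot x_O=\alpha\cos\psi(t)$, $\dot y_O=\alpha\sin\psi(t)$, heading $\psi$ a measurable control. Contact with bearing $\lambda$ at time $t_2$ means $\big(x_O(t_2),y_O(t_2)-y_T(t_2)\big)=R(\sin\lambda,\cos\lambda)$. For a control on $[t_2,\infty)$, $t_f=\inf\{t\ge t_2: x_O(t)^2+(y_O(t)-y_T(t))^2>R^2\}$ and the observation time is $t_f-t_2$; $V(\lambda)$ is the supremum of $t_f-t_2$ over all controls. *)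

theory Defs
  imports "HOL-Analysis.Analysis"
begin

text \<open>Phase II: at contact time t2 the target is at (0, yT2); the target moves as
  y_T(t) = yT2 + (t - t2).\<close>

definition obs_x :: "real \<Rightarrow> real \<Rightarrow> real \<Rightarrow> real \<Rightarrow> (real \<Rightarrow> real) \<Rightarrow> real \<Rightarrow> real" where
  "obs_x \<alpha> R t2 lam \<psi> t = R * sin lam + integral {t2..t} (\<lambda>s. \<alpha> * cos (\<psi> s))"

definition obs_y :: "real \<Rightarrow> real \<Rightarrow> real \<Rightarrow> real \<Rightarrow> real \<Rightarrow> (real \<Rightarrow> real) \<Rightarrow> real \<Rightarrow> real" where
  "obs_y \<alpha> R t2 yT2 lam \<psi> t = yT2 + R * cos lam + integral {t2..t} (\<lambda>s. \<alpha> * sin (\<psi> s))"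

definition tgt_y :: "real \<Rightarrow> real \<Rightarrow> real \<Rightarrow> real" where
  "tgt_y t2 yT2 t = yT2 + (t - t2)"

definition exit_time :: "real \<Rightarrow> real \<Rightarrow> real \<Rightarrow> real \<Rightarrow> real \<Rightarrow> (real \<Rightarrow> real) \<Rightarrow> real" where
  "exit_time \<alpha> R t2 yT2 lam \<psi> =
     Inf {t. t2 \<le> t \<and> (obs_x \<alpha> R t2 lam \<psi> t)\<^sup>2
                 + (obs_y \<alpha> R t2 yT2 lam \<psi> t - tgt_y t2 yT2 t)\<^sup>2 > R\<^sup>2}"

definition V :: "real \<Rightarrow> real \<Rightarrow> real \<Rightarrow> real \<Rightarrow> real \<Rightarrow> real" where
  "V \<alpha> R t2 yT2 lam =
     Sup {exit_time \<alpha> R t2 yT2 lam \<psi> - t2 | \<psi>. \<psi> \<in> borel_measurable borel}"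

end

theory Submission
  imports Defs
begin

text \<open>
  In coordinates relative to the target the observer moves with velocity
  (a cos \<psi>, a sin \<psi> - 1), and observation lasts while it stays in the disk of radius R.
  Replacing \<psi> by \<pi> - \<psi> reflects trajectories in the y-axis, so V(-\<lambda>) = V(\<lambda>), and it
  suffices to show that V increases on [-\<pi>, 0]. For bearings \<lambda>1 \<le> \<lambda>2 in the same quarter
  we show that every time for which some control keeps the observer in the disk from the
  contact point p1 of \<lambda>1 is also achieved from the contact point p2 of \<lambda>2: the observer
  at p2 moves along a straight segment, which lies in the disk by convexity, until it meets
  the old trajectory no later than that did, and then follows it with a delay.
  In the front quarter [-\<pi>/2, 0] the segment points straight down, towards the point where
  the old trajectory crosses the vertical through p2; if it never crosses, going straight
  down survives long enough by itself. In the rear quarter [-\<pi>, -\<pi>/2] the segment is the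
  chord from p2 to p1, which is steep enough to be a feasible relative direction unless
  cos \<lambda>1 \<le> -a; but then every trajectory from p1 leaves the disk at once.
\<close>

definition rel_velocity :: "real \<Rightarrow> real \<Rightarrow> real \<times> real" where
  "rel_velocity a c = (a * cos c, a * sin c - 1)"

definition rel_pos :: "real \<Rightarrow> (real \<Rightarrow> real) \<Rightarrow> real \<Rightarrow> real \<times> real \<Rightarrow> real \<Rightarrow> real \<times> real" where
  "rel_pos a \<psi> t\<^sub>0 p t = p + integral {t\<^sub>0..t} (\<lambda>s. rel_velocity a (\<psi> s))"

definition stays_in_disk :: "real \<Rightarrow> real \<Rightarrow> (real \<Rightarrow> real) \<Rightarrow> real \<Rightarrow> real \<times> real \<Rightarrow> real \<Rightarrow> bool" where
  "stays_in_disk a R \<psi> t\<^sub>0 p T \<longleftrightarrow> (\<forall>t\<in>{t\<^sub>0..t\<^sub>0+T}. rel_pos a \<psi> t\<^sub>0 p t \<in> cball 0 R)"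

definition first_exit :: "real \<Rightarrow> real \<Rightarrow> (real \<Rightarrow> real) \<Rightarrow> real \<Rightarrow> real \<times> real \<Rightarrow> real" where
  "first_exit a R \<psi> t\<^sub>0 p = Inf {t. t\<^sub>0 \<le> t \<and> rel_pos a \<psi> t\<^sub>0 p t \<notin> cball 0 R}"

definition contact_point :: "real \<Rightarrow> real \<Rightarrow> real \<times> real" where
  "contact_point R l = (R * sin l, R * cos l)"

lemma norm_rel_velocity_le: "norm (rel_velocity a c) \<le> 2 * \<bar>a\<bar> + 1"
proof -
  have "norm (rel_velocity a c) \<le> \<bar>a * cos c\<bar> + \<bar>a * sin c - 1\<bar>"
    unfolding rel_velocity_def using norm_Pair_le by (metis real_norm_def)
  also have "\<dots> \<le> \<bar>a\<bar> + (\<bar>a\<bar> + 1)"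
    using abs_cos_le_one[of c] abs_sin_le_one[of c]
    by (intro add_mono order.trans[OF abs_triangle_ineq4]) (auto simp: abs_mult mult_left_le)
  finally show ?thesis by simp
qed

lemma rel_velocity_integrable:
  fixes \<psi> :: "real \<Rightarrow> real"
  assumes "\<psi> \<in> borel_measurable borel"
  shows "(\<lambda>s. rel_velocity a (\<psi> s)) integrable_on {u..v}"
proof (rule measurable_bounded_by_integrable_imp_integrable)
  have "\<psi> \<in> borel_measurable (lebesgue_on {u..v})"
    using assms by (metis measurable_lborel2 measurable_restrict_space1 measurable_completion)
  then show "(\<lambda>s. rel_velocity a (\<psi> s)) \<in> borel_measurable (lebesgue_on {u..v})"
    unfolding rel_velocity_def by measurable
  show "(\<lambda>_. 2 * \<bar>a\<bar> + 1) integrable_on {u..v}" by (rule integrable_const_ivl)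
qed (use norm_rel_velocity_le in auto)

lemma rel_pos_start [simp]: "rel_pos a \<psi> t\<^sub>0 p t\<^sub>0 = p"
  unfolding rel_pos_def by simp

lemma rel_pos_split:
  fixes \<psi> :: "real \<Rightarrow> real"
  assumes "\<psi> \<in> borel_measurable borel" and "t\<^sub>0 \<le> r" and "r \<le> t"
  shows "rel_pos a \<psi> t\<^sub>0 p t = rel_pos a \<psi> r (rel_pos a \<psi> t\<^sub>0 p r) t"
  unfolding rel_pos_def
  using Henstock_Kurzweil_Integration.integral_combine[OF assms(2,3) rel_velocity_integrable[OF assms(1)]]
  by (simp add: add.assoc)

lemma rel_pos_shift: "rel_pos a (\<lambda>u. \<psi> (u + h)) t\<^sub>0 p t = rel_pos a \<psi> (t\<^sub>0 + h) p (t + h)"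
  unfolding rel_pos_def using integral_shift_Icc_real[of t\<^sub>0 t "\<lambda>s. rel_velocity a (\<psi> s)" h]
  by (simp add: o_def add.commute)

lemma rel_pos_cong:
  assumes "\<And>u. t\<^sub>0 < u \<Longrightarrow> u < t \<Longrightarrow> \<psi> u = \<phi> u"
  shows "rel_pos a \<psi> t\<^sub>0 p t = rel_pos a \<phi> t\<^sub>0 p t"
  unfolding rel_pos_def
  by (rule arg_cong[where f="(+) p"], rule integral_spike[of "{t\<^sub>0, t}"]) (use assms in auto)

lemma rel_pos_const:
  assumes "t\<^sub>0 \<le> t"
  shows "rel_pos a (\<lambda>_. c) t\<^sub>0 p t = p + (t - t\<^sub>0) *\<^sub>R rel_velocity a c"
  unfolding rel_pos_def using assms by simp

lemma snd_rel_pos_le: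
  fixes \<psi> :: "real \<Rightarrow> real"
  assumes "\<psi> \<in> borel_measurable borel" and "0 \<le> a" and "t\<^sub>0 \<le> t"
  shows "snd (rel_pos a \<psi> t\<^sub>0 p t) \<le> snd p - (1 - a) * (t - t\<^sub>0)"
proof -
  have "integral {t\<^sub>0..t} (\<lambda>s. rel_velocity a (\<psi> s)) \<bullet> (0, 1) \<le> (a - 1) * (t - t\<^sub>0)"
    using integral_component_ubound_real[OF rel_velocity_integrable[OF assms(1), of a t\<^sub>0 t],
        where k="(0, 1)" and B="a - 1"] assms
    by (auto simp: rel_velocity_def Basis_prod_def mult_left_le)
  then show ?thesis
    unfolding rel_pos_def by (simp add: inner_Pair_0 algebra_simps)
qed

lemma continuous_on_rel_pos:
  fixes \<psi> :: "real \<Rightarrow> real"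
  assumes "\<psi> \<in> borel_measurable borel"
  shows "continuous_on {t\<^sub>0..t} (rel_pos a \<psi> t\<^sub>0 p)"
  unfolding rel_pos_def
  by (intro continuous_intros indefinite_integral_continuous_1 rel_velocity_integrable assms)

lemma Pair_mem_cball_0_iff:
  fixes x y :: real
  assumes "0 \<le> R"
  shows "(x, y) \<in> cball 0 R \<longleftrightarrow> x\<^sup>2 + y\<^sup>2 \<le> R\<^sup>2"
  using assms real_sqrt_le_iff[of "x\<^sup>2 + y\<^sup>2" "R\<^sup>2"] by (simp add: norm_Pair)

lemma contact_point_on_circle: "(fst (contact_point R l))\<^sup>2 + (snd (contact_point R l))\<^sup>2 = R\<^sup>2"
  unfolding contact_point_def by (simp add: power_mult_distrib flip: distrib_left)

lemma norm_contact_point [simp]: "0 \<le> R \<Longrightarrow> norm (contact_point R l) = R"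
  using contact_point_on_circle[of R l] by (simp add: contact_point_def norm_Pair)

lemma rel_pos_contact_point:
  fixes \<psi> :: "real \<Rightarrow> real"
  assumes "\<psi> \<in> borel_measurable borel" and "t2 \<le> t"
  shows "rel_pos a \<psi> t2 (contact_point R l) t
    = (obs_x a R t2 l \<psi> t, obs_y a R t2 yT2 l \<psi> t - tgt_y t2 yT2 t)"
proof -
  have int: "(\<lambda>s. rel_velocity a (\<psi> s)) integrable_on {t2..t}"
    by (rule rel_velocity_integrable[OF assms(1)])
  have "fst (integral {t2..t} (\<lambda>s. rel_velocity a (\<psi> s))) = integral {t2..t} (\<lambda>s. a * cos (\<psi> s))"
    using integral_linear[OF int bounded_linear_fst] by (simp add: o_def rel_velocity_def)
  moreover have "snd (integral {t2..t} (\<lambda>s. rel_velocity a (\<psi> s)))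
      = integral {t2..t} (\<lambda>s. a * sin (\<psi> s)) - (t - t2)"
  proof -
    have "(\<lambda>s. a * sin (\<psi> s) - 1) integrable_on {t2..t}"
      using integrable_linear[OF int bounded_linear_snd] by (simp add: o_def rel_velocity_def)
    from integral_add[OF this integrable_const_ivl[of 1 t2 t]] assms(2) show ?thesis
      using integral_linear[OF int bounded_linear_snd] by (simp add: o_def rel_velocity_def)
  qed
  ultimately show ?thesis
    unfolding rel_pos_def contact_point_def obs_x_def obs_y_def tgt_y_def by (simp add: prod_eq_iff)
qed

lemma exit_time_eq_first_exit:
  fixes \<psi> :: "real \<Rightarrow> real"
  assumes "\<psi> \<in> borel_measurable borel" and "0 \<le> R"
  shows "exit_time a R t2 yT2 l \<psi> = first_exit a R \<psi> t2 (contact_point R l)"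
  unfolding exit_time_def first_exit_def
  using rel_pos_contact_point[OF assms(1)] Pair_mem_cball_0_iff[OF assms(2)]
  by (metis (lifting) not_le)

lemma rel_pos_leaves_disk:
  fixes \<psi> :: "real \<Rightarrow> real"
  assumes "\<psi> \<in> borel_measurable borel" and "0 \<le> a" and "a < 1" and "norm p \<le> R"
  shows "rel_pos a \<psi> t\<^sub>0 p (t\<^sub>0 + (2 * R + 1) / (1 - a)) \<notin> cball 0 R"
proof -
  let ?q = "rel_pos a \<psi> t\<^sub>0 p (t\<^sub>0 + (2 * R + 1) / (1 - a))"
  have "R \<ge> 0" using assms(4) norm_ge_zero order_trans by blast
  then have "snd ?q \<le> snd p - (2 * R + 1)"
    using snd_rel_pos_le[OF assms(1,2), of t\<^sub>0 "t\<^sub>0 + (2 * R + 1) / (1 - a)" p] assms(3) by simp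
  moreover have "\<bar>snd p\<bar> \<le> R" "\<bar>snd ?q\<bar> \<le> norm ?q"
    using norm_snd_le[of "snd p" "fst p"] norm_snd_le[of "snd ?q" "fst ?q"] assms(4) by simp_all
  ultimately show ?thesis by simp
qed

lemma
  fixes \<psi> :: "real \<Rightarrow> real"
  assumes "\<psi> \<in> borel_measurable borel" and "0 \<le> a" and "a < 1" and "norm p \<le> R"
  shows first_exit_ge: "t\<^sub>0 \<le> first_exit a R \<psi> t\<^sub>0 p"
    and first_exit_le: "first_exit a R \<psi> t\<^sub>0 p \<le> t\<^sub>0 + (2 * R + 1) / (1 - a)"
    and first_exit_ge_if_stays: "stays_in_disk a R \<psi> t\<^sub>0 p T \<Longrightarrow> t\<^sub>0 + T \<le> first_exit a R \<psi> t\<^sub>0 p"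
proof -
  let ?E = "{t. t\<^sub>0 \<le> t \<and> rel_pos a \<psi> t\<^sub>0 p t \<notin> cball 0 R}"
  have "R \<ge> 0" using assms(4) norm_ge_zero order_trans by blast
  then have out: "t\<^sub>0 + (2 * R + 1) / (1 - a) \<in> ?E"
    using rel_pos_leaves_disk[OF assms] assms(3) by simp
  then show "t\<^sub>0 \<le> first_exit a R \<psi> t\<^sub>0 p"
    unfolding first_exit_def by (intro cInf_greatest) blast+
  show "first_exit a R \<psi> t\<^sub>0 p \<le> t\<^sub>0 + (2 * R + 1) / (1 - a)"
    unfolding first_exit_def by (rule cInf_lower[OF out]) (auto intro: bdd_belowI)
  show "t\<^sub>0 + T \<le> first_exit a R \<psi> t\<^sub>0 p" if "stays_in_disk a R \<psi> t\<^sub>0 p T"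
    unfolding first_exit_def using that out
    by (intro cInf_greatest) (blast, force simp: stays_in_disk_def)
qed

lemma stays_in_disk_before_first_exit:
  assumes "t\<^sub>0 + T < first_exit a R \<psi> t\<^sub>0 p"
  shows "stays_in_disk a R \<psi> t\<^sub>0 p T"
  unfolding stays_in_disk_def
proof
  fix t assume t: "t \<in> {t\<^sub>0..t\<^sub>0+T}"
  show "rel_pos a \<psi> t\<^sub>0 p t \<in> cball 0 R"
  proof (rule ccontr)
    assume "rel_pos a \<psi> t\<^sub>0 p t \<notin> cball 0 R"
    then have "first_exit a R \<psi> t\<^sub>0 p \<le> t"
      unfolding first_exit_def using t by (intro cInf_lower) (auto intro: bdd_belowI)
    with t assms show False by simp
  qed
qed

lemma V_eq_Sup_first_exit:
  assumes "0 \<le> R"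
  shows "V a R t2 yT2 l
    = Sup {first_exit a R \<psi> t2 (contact_point R l) - t2 | \<psi>. \<psi> \<in> borel_measurable borel}"
  unfolding V_def using exit_time_eq_first_exit[OF _ assms] by metis

lemma first_exit_le_V:
  fixes \<psi> :: "real \<Rightarrow> real"
  assumes "\<psi> \<in> borel_measurable borel" and "0 \<le> a" and "a < 1" and "0 \<le> R"
  shows "first_exit a R \<psi> t2 (contact_point R l) - t2 \<le> V a R t2 yT2 l"
  unfolding V_eq_Sup_first_exit[OF assms(4)]
proof (rule cSup_upper)
  show "bdd_above {first_exit a R \<psi> t2 (contact_point R l) - t2 | \<psi>. \<psi> \<in> borel_measurable borel}"
    using first_exit_le[OF _ assms(2,3), where p="contact_point R l" and t\<^sub>0=t2] assms(4)
    by (intro bdd_aboveI[of _ "(2 * R + 1) / (1 - a)"]) force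
qed (use assms(1) in blast)

lemma V_le_V_if_survival_transfers:
  assumes "0 \<le> a" and "a < 1" and "0 \<le> R"
    and transfer: "\<And>\<psi> T. \<psi> \<in> borel_measurable borel \<Longrightarrow> 0 \<le> T \<Longrightarrow>
      stays_in_disk a R \<psi> t2 (contact_point R l1) T \<Longrightarrow>
      \<exists>\<phi> \<in> borel_measurable borel. stays_in_disk a R \<phi> t2 (contact_point R l2) T"
  shows "V a R t2 yT2 l1 \<le> V a R t2 yT2 l2"
  unfolding V_eq_Sup_first_exit[OF assms(3), of a t2 yT2 l1]
proof (rule cSup_least)
  have "(\<lambda>_. 0) \<in> borel_measurable borel" by simp
  then show "{first_exit a R \<psi> t2 (contact_point R l1) - t2 | \<psi>. \<psi> \<in> borel_measurable borel} \<noteq> {}"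
    by blast
  fix x assume "x \<in> {first_exit a R \<psi> t2 (contact_point R l1) - t2 | \<psi>. \<psi> \<in> borel_measurable borel}"
  then obtain \<psi> where \<psi>: "\<psi> \<in> borel_measurable borel"
    and x: "x = first_exit a R \<psi> t2 (contact_point R l1) - t2" by blast
  show "x \<le> V a R t2 yT2 l2"
  proof (rule dense_le)
    fix T assume "T < x"
    have "\<exists>\<phi> \<in> borel_measurable borel. T \<le> first_exit a R \<phi> t2 (contact_point R l2) - t2"
    proof (cases "0 \<le> T")
      case True
      then have "stays_in_disk a R \<psi> t2 (contact_point R l1) T"
        using \<open>T < x\<close> x by (intro stays_in_disk_before_first_exit) simp
      then obtain \<phi> where \<phi>: "\<phi> \<in> borel_measurable borel"
        and "stays_in_disk a R \<phi> t2 (contact_point R l2) T"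
        using transfer[OF \<psi> True] by blast
      then have "t2 + T \<le> first_exit a R \<phi> t2 (contact_point R l2)"
        by (intro first_exit_ge_if_stays[OF \<phi> assms(1,2)]) (simp_all add: assms(3))
      with \<phi> show ?thesis by force
    next
      case False
      have "t2 \<le> first_exit a R (\<lambda>_. 0) t2 (contact_point R l2)"
        by (rule first_exit_ge[OF _ assms(1,2)]) (simp_all add: assms(3))
      with False show ?thesis
        by (intro bexI[of _ "\<lambda>_. 0"]) simp_all
    qed
    then show "T \<le> V a R t2 yT2 l2"
      using first_exit_le_V[OF _ assms(1-3)] by (meson order_trans)
  qed
qed

lemma convex_ray_segment:
  assumes "convex S" and "p \<in> S" and "p + \<tau> *\<^sub>R v \<in> S" and "0 \<le> t" and "t \<le> \<tau>"
  shows "p + t *\<^sub>R v \<in> S"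
proof (cases "\<tau> = 0")
  case True
  then show ?thesis using assms by simp
next
  case False
  then have "(1 - t / \<tau>) *\<^sub>R p + (t / \<tau>) *\<^sub>R (p + \<tau> *\<^sub>R v) \<in> S"
    using assms by (intro convexD) (auto simp: field_simps)
  with False show ?thesis by (simp add: algebra_simps)
qed

lemma stays_in_disk_const_heading:
  assumes "0 \<le> T" and "p \<in> cball 0 R" and "p + T *\<^sub>R rel_velocity a c \<in> cball 0 R"
  shows "stays_in_disk a R (\<lambda>_. c) t\<^sub>0 p T"
  unfolding stays_in_disk_def
  using convex_ray_segment[OF convex_cball assms(2,3)] by (auto simp: rel_pos_const)

lemma stays_in_disk_tail:
  fixes \<psi> :: "real \<Rightarrow> real"
  assumes "\<psi> \<in> borel_measurable borel" and "0 \<le> s" and "stays_in_disk a R \<psi> t\<^sub>0 p T"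
  shows "stays_in_disk a R (\<lambda>u. \<psi> (u + s)) t\<^sub>0 (rel_pos a \<psi> t\<^sub>0 p (t\<^sub>0 + s)) (T - s)"
  unfolding stays_in_disk_def
proof
  fix t assume t: "t \<in> {t\<^sub>0..t\<^sub>0 + (T - s)}"
  have "rel_pos a (\<lambda>u. \<psi> (u + s)) t\<^sub>0 (rel_pos a \<psi> t\<^sub>0 p (t\<^sub>0 + s)) t = rel_pos a \<psi> t\<^sub>0 p (t + s)"
    using t assms(2) by (simp add: rel_pos_shift rel_pos_split[OF assms(1), symmetric])
  then show "rel_pos a (\<lambda>u. \<psi> (u + s)) t\<^sub>0 (rel_pos a \<psi> t\<^sub>0 p (t\<^sub>0 + s)) t \<in> cball 0 R"
    using assms(2,3) t unfolding stays_in_disk_def by auto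
qed

lemma stays_in_disk_prepend_segment:
  fixes \<psi> :: "real \<Rightarrow> real"
  assumes "\<psi> \<in> borel_measurable borel" and "0 \<le> \<tau>" and "0 \<le> T" and "p \<in> cball 0 R"
    and "stays_in_disk a R \<psi> t\<^sub>0 (p + \<tau> *\<^sub>R rel_velocity a c) T"
  shows "\<exists>\<phi> \<in> borel_measurable borel. stays_in_disk a R \<phi> t\<^sub>0 p (\<tau> + T)"
proof
  define r where "r = p + \<tau> *\<^sub>R rel_velocity a c"
  define \<phi> where "\<phi> u = (if u < t\<^sub>0 + \<tau> then c else \<psi> (u - \<tau>))" for u
  show \<phi>_meas: "\<phi> \<in> borel_measurable borel"
    unfolding \<phi>_def using assms(1) by measurable
  have r: "r \<in> cball 0 R"
    using assms(3,5) unfolding stays_in_disk_def r_def by force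
  have segment: "rel_pos a \<phi> t\<^sub>0 p t = p + (t - t\<^sub>0) *\<^sub>R rel_velocity a c"
    if "t\<^sub>0 \<le> t" "t \<le> t\<^sub>0 + \<tau>" for t
    using that by (simp add: rel_pos_cong[of t\<^sub>0 t \<phi> "\<lambda>_. c"] \<phi>_def rel_pos_const)
  show "stays_in_disk a R \<phi> t\<^sub>0 p (\<tau> + T)"
    unfolding stays_in_disk_def
  proof
    fix t assume t: "t \<in> {t\<^sub>0..t\<^sub>0 + (\<tau> + T)}"
    show "rel_pos a \<phi> t\<^sub>0 p t \<in> cball 0 R"
    proof (cases "t \<le> t\<^sub>0 + \<tau>")
      case True
      then show ?thesis
        using t segment convex_ray_segment[OF convex_cball assms(4) r[unfolded r_def]] by simp
    next
      case False
      have "rel_pos a \<phi> t\<^sub>0 p t = rel_pos a \<phi> (t\<^sub>0 + \<tau>) r t"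
        using rel_pos_split[OF \<phi>_meas, of t\<^sub>0 "t\<^sub>0 + \<tau>" t] False assms(2)
        by (simp add: segment r_def)
      also have "\<dots> = rel_pos a (\<lambda>u. \<psi> (u + - \<tau>)) (t\<^sub>0 + \<tau>) r t"
        by (rule rel_pos_cong) (simp add: \<phi>_def)
      also have "\<dots> = rel_pos a \<psi> t\<^sub>0 r (t - \<tau>)"
        unfolding rel_pos_shift by simp
      finally show ?thesis
        using assms(5) t False unfolding stays_in_disk_def r_def by auto
    qed
  qed
qed

lemma survival_transfers_by_catching_up:
  fixes \<psi> :: "real \<Rightarrow> real"
  assumes \<psi>: "\<psi> \<in> borel_measurable borel" and s: "0 \<le> s" "s \<le> T" "s \<le> \<tau>"
    and "p \<in> cball 0 R"
    and meet: "p + \<tau> *\<^sub>R rel_velocity a c = rel_pos a \<psi> t\<^sub>0 q (t\<^sub>0 + s)"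
    and "stays_in_disk a R \<psi> t\<^sub>0 q T"
  shows "\<exists>\<phi> \<in> borel_measurable borel. stays_in_disk a R \<phi> t\<^sub>0 p T"
proof -
  have "stays_in_disk a R (\<lambda>u. \<psi> (u + s)) t\<^sub>0 (p + \<tau> *\<^sub>R rel_velocity a c) (T - s)"
    unfolding meet using stays_in_disk_tail[OF \<psi> s(1)] assms(7) .
  moreover have "(\<lambda>u. \<psi> (u + s)) \<in> borel_measurable borel"
    using \<psi> by measurable
  moreover have "0 \<le> \<tau>" "0 \<le> T - s"
    using s by simp_all
  ultimately obtain \<phi> where \<phi>: "\<phi> \<in> borel_measurable borel"
    and "stays_in_disk a R \<phi> t\<^sub>0 p (\<tau> + (T - s))"
    using stays_in_disk_prepend_segment[OF _ _ _ \<open>p \<in> cball 0 R\<close>] by blast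
  moreover have "T \<le> \<tau> + (T - s)"
    using s by simp
  ultimately have "stays_in_disk a R \<phi> t\<^sub>0 p T"
    unfolding stays_in_disk_def by auto
  with \<phi> show ?thesis by blast
qed

lemma norm_lt_norm_rel_pos:
  fixes \<psi> :: "real \<Rightarrow> real"
  assumes "\<psi> \<in> borel_measurable borel" and "0 \<le> a" and "a < 1"
    and "snd p \<le> - a * norm p" and "t\<^sub>0 < t"
  shows "norm p < norm (rel_pos a \<psi> t\<^sub>0 p t)"
proof -
  define D where "D = integral {t\<^sub>0..t} (\<lambda>s. rel_velocity a (\<psi> s))"
  \<comment> \<open>Every relative velocity points away from p, and the displacement D is nonzero.\<close>
  have heading_nonneg: "0 \<le> p \<bullet> rel_velocity a c" for c
  proof -
    have "\<bar>p \<bullet> (cos c, sin c)\<bar> \<le> norm p"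
      using Cauchy_Schwarz_ineq2[of p "(cos c, sin c)"] by (simp add: norm_Pair)
    then have "- (a * norm p) \<le> a * (p \<bullet> (cos c, sin c))"
      using assms(2) by (metis abs_le_iff minus_le_iff mult_left_mono mult_minus_right)
    with assms(4) show ?thesis
      by (cases p) (simp add: rel_velocity_def algebra_simps)
  qed
  have "p \<bullet> D = integral {t\<^sub>0..t} (\<lambda>s. p \<bullet> rel_velocity a (\<psi> s))"
    using integral_linear[OF rel_velocity_integrable[OF assms(1)] bounded_linear_inner_right[of p]]
    by (simp add: D_def o_def)
  also have "\<dots> \<ge> 0"
    using integrable_linear[OF rel_velocity_integrable[OF assms(1), of a t\<^sub>0 t]
        bounded_linear_inner_right[of p]]
    by (intro integral_nonneg heading_nonneg) (simp_all add: o_def)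
  finally have "0 \<le> p \<bullet> D" .
  moreover have "0 < (1 - a) * (t - t\<^sub>0)"
    using assms(3,5) by simp
  then have "snd D < 0"
    using snd_rel_pos_le[OF assms(1,2), of t\<^sub>0 t p] assms(5) by (simp add: rel_pos_def D_def)
  then have "0 < D \<bullet> D"
    by (metis inner_gt_zero_iff less_irrefl snd_zero)
  moreover have "(norm (p + D))\<^sup>2 = (norm p)\<^sup>2 + 2 * (p \<bullet> D) + D \<bullet> D"
    by (simp add: power2_norm_eq_inner inner_add inner_commute)
  ultimately have "(norm p)\<^sup>2 < (norm (p + D))\<^sup>2"
    by linarith
  then show ?thesis
    unfolding rel_pos_def D_def by (rule power2_less_imp_less) simp
qed

lemma exists_heading_for_displacement:
  assumes "0 < a" and "a < 1" and "snd d < 0"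
    and "(1 - a\<^sup>2) * (fst d)\<^sup>2 \<le> a\<^sup>2 * (snd d)\<^sup>2"
  shows "\<exists>\<tau> > 0. \<exists>c. d = \<tau> *\<^sub>R rel_velocity a c"
proof -
  \<comment> \<open>The duration solves |d + (0, \<tau>)| = a \<tau>; a root lies between 0 and the vertex \<tau>1 of g.\<close>
  define g where "g \<tau> = (fst d)\<^sup>2 + (snd d + \<tau>)\<^sup>2 - (a * \<tau>)\<^sup>2" for \<tau>
  define \<tau>\<^sub>1 where "\<tau>\<^sub>1 = - snd d / (1 - a\<^sup>2)"
  have a2: "0 < 1 - a\<^sup>2"
    using assms(1,2) by (simp add: power_less_one_iff)
  have "0 < g 0"
    unfolding g_def using assms(3) by (simp add: add_nonneg_pos)
  moreover have dy: "snd d = - ((1 - a\<^sup>2) * \<tau>\<^sub>1)"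
    unfolding \<tau>\<^sub>1_def using a2 by simp
  have "(1 - a\<^sup>2) * g \<tau>\<^sub>1 = (1 - a\<^sup>2) * (fst d)\<^sup>2 - a\<^sup>2 * (snd d)\<^sup>2"
    unfolding g_def dy by (simp add: power2_eq_square algebra_simps)
  then have "(1 - a\<^sup>2) * g \<tau>\<^sub>1 \<le> 0"
    using assms(4) by simp
  then have "g \<tau>\<^sub>1 \<le> 0"
    using a2 by (simp add: mult_le_0_iff)
  moreover have "0 \<le> \<tau>\<^sub>1"
    unfolding \<tau>\<^sub>1_def using assms(3) a2 by (simp add: divide_nonpos_pos)
  moreover have "continuous_on {0..\<tau>\<^sub>1} g"
    unfolding g_def by (intro continuous_intros)
  ultimately obtain \<tau> where "0 \<le> \<tau>" and root: "g \<tau> = 0"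
    using IVT2'[of g \<tau>\<^sub>1 0 0] by auto
  with \<open>0 < g 0\<close> have \<tau>: "0 < \<tau>"
    by (metis less_eq_real_def less_irrefl)
  with root have "(fst d / (a * \<tau>))\<^sup>2 + ((snd d + \<tau>) / (a * \<tau>))\<^sup>2 = 1"
    unfolding g_def using assms(1) by (simp add: field_simps)
  then obtain c where "fst d / (a * \<tau>) = cos c" "(snd d + \<tau>) / (a * \<tau>) = sin c"
    by (metis sincos_total_2pi)
  then have "d = \<tau> *\<^sub>R rel_velocity a c"
    using \<tau> assms(1) by (simp add: rel_velocity_def prod_eq_iff field_simps)
  with \<tau> show ?thesis by blast
qed

lemma contact_point_front_quarter:
  assumes "0 \<le> R" and "- (pi / 2) \<le> l1" and "l1 \<le> l2" and "l2 \<le> 0"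
  shows "fst (contact_point R l1) \<le> fst (contact_point R l2)" "fst (contact_point R l2) \<le> 0"
    "snd (contact_point R l1) \<le> snd (contact_point R l2)" "0 \<le> snd (contact_point R l1)"
proof -
  have "sin l1 \<le> sin l2" "sin l2 \<le> 0" "cos l1 \<le> cos l2" "0 \<le> cos l1"
    using assms sin_monotone_2pi_le[of l1 l2] sin_ge_zero[of "- l2"]
      cos_monotone_minus_pi_0'[of l1 l2] cos_ge_zero[of l1] by auto
  then show "fst (contact_point R l1) \<le> fst (contact_point R l2)" "fst (contact_point R l2) \<le> 0"
    "snd (contact_point R l1) \<le> snd (contact_point R l2)" "0 \<le> snd (contact_point R l1)"
    unfolding contact_point_def using assms(1) by (auto intro: mult_left_mono mult_nonneg_nonpos)
qed

lemma Pair_mem_cball_0_iff_abs_le: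
  fixes x y y' :: real
  assumes "0 \<le> R" and "x\<^sup>2 + y'\<^sup>2 = R\<^sup>2" and "0 \<le> y'"
  shows "(x, y) \<in> cball 0 R \<longleftrightarrow> \<bar>y\<bar> \<le> y'"
  using Pair_mem_cball_0_iff[OF assms(1)] assms(2,3) abs_le_square_iff[of y y'] by auto

lemma survival_transfers_front:
  fixes \<psi> :: "real \<Rightarrow> real"
  assumes "0 \<le> a" and "a < 1" and "0 \<le> R"
    and l: "- (pi / 2) \<le> l1" "l1 \<le> l2" "l2 \<le> 0"
    and \<psi>: "\<psi> \<in> borel_measurable borel" and "0 \<le> T"
    and stays: "stays_in_disk a R \<psi> t\<^sub>0 (contact_point R l1) T"
  shows "\<exists>\<phi> \<in> borel_measurable borel. stays_in_disk a R \<phi> t\<^sub>0 (contact_point R l2) T"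
proof -
  obtain x1 y1 x2 y2 where p1: "contact_point R l1 = (x1, y1)" and p2: "contact_point R l2 = (x2, y2)"
    by fastforce
  have "x1 \<le> x2" "x2 \<le> 0" "y1 \<le> y2" "0 \<le> y1"
    using contact_point_front_quarter[OF assms(3) l] unfolding p1 p2 by simp_all
  have p2_in: "(x2, y2) \<in> cball 0 R"
    using norm_contact_point[OF assms(3), of l2] unfolding p2 by simp
  have vertical_in: "(x2, y) \<in> cball 0 R \<longleftrightarrow> \<bar>y\<bar> \<le> y2" for y
    using Pair_mem_cball_0_iff_abs_le[OF assms(3)] contact_point_on_circle[of R l2]
      \<open>0 \<le> y1\<close> \<open>y1 \<le> y2\<close> unfolding p2 by simp
  have down: "(x2, y2) + \<tau> *\<^sub>R rel_velocity a (pi / 2) = (x2, y2 - (1 - a) * \<tau>)" for \<tau>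
    by (simp add: rel_velocity_def algebra_simps)
  let ?P = "rel_pos a \<psi> t\<^sub>0 (x1, y1)"
  have descent: "snd (?P t) \<le> y1 - (1 - a) * (t - t\<^sub>0)" if "t\<^sub>0 \<le> t" for t
    using snd_rel_pos_le[OF \<psi> assms(1) that, of "(x1, y1)"] by simp
  have P_in: "?P t \<in> cball 0 R" if "t\<^sub>0 \<le> t" "t \<le> t\<^sub>0 + T" for t
    using stays that unfolding p1 stays_in_disk_def by simp
  consider (crossing) s where "0 \<le> s" "s \<le> T" "fst (?P (t\<^sub>0 + s)) = x2"
    | (left) "fst (?P (t\<^sub>0 + T)) < x2"
  proof (cases "fst (?P (t\<^sub>0 + T)) < x2")
    case False
    have "continuous_on {t\<^sub>0..t\<^sub>0 + T} (\<lambda>t. fst (?P t))"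
      by (intro continuous_on_fst continuous_on_rel_pos \<psi>)
    then obtain t where "t\<^sub>0 \<le> t" "t \<le> t\<^sub>0 + T" "fst (?P t) = x2"
      using IVT'[of "\<lambda>t. fst (?P t)" t\<^sub>0 x2 "t\<^sub>0 + T"] False \<open>x1 \<le> x2\<close> \<open>0 \<le> T\<close> by auto
    then show ?thesis
      using that(1)[of "t - t\<^sub>0"] by simp
  qed auto
  then show ?thesis
  proof cases
    case crossing
    then obtain y where q: "?P (t\<^sub>0 + s) = (x2, y)"
      by (metis prod.collapse)
    have "y \<le> y1 - (1 - a) * s" "\<bar>y\<bar> \<le> y2"
      using descent[of "t\<^sub>0 + s"] P_in[of "t\<^sub>0 + s"] crossing q vertical_in by simp_all
    then have "s \<le> (y2 - y) / (1 - a)"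
      using assms(2) \<open>y1 \<le> y2\<close> by (simp add: field_simps)
    moreover have "(x2, y2) + ((y2 - y) / (1 - a)) *\<^sub>R rel_velocity a (pi / 2) = ?P (t\<^sub>0 + s)"
      unfolding down q using assms(2) by simp
    ultimately show ?thesis
      using survival_transfers_by_catching_up[OF \<psi> crossing(1,2) _ p2_in _ stays[unfolded p1]]
      unfolding p2 by blast
  next
    case left
    obtain x y where q: "?P (t\<^sub>0 + T) = (x, y)"
      by fastforce
    have "\<bar>y\<bar> \<le> y2"
    proof -
      have "x2\<^sup>2 \<le> x\<^sup>2"
        using left q \<open>x2 \<le> 0\<close> by (simp add: abs_le_square_iff[symmetric])
      moreover have "x\<^sup>2 + y\<^sup>2 \<le> R\<^sup>2" "x2\<^sup>2 + y2\<^sup>2 = R\<^sup>2"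
        using P_in[of "t\<^sub>0 + T"] \<open>0 \<le> T\<close> q Pair_mem_cball_0_iff[OF assms(3)]
          contact_point_on_circle[of R l2] unfolding p2 by simp_all
      ultimately show ?thesis
        using abs_le_square_iff[of y y2] \<open>0 \<le> y1\<close> \<open>y1 \<le> y2\<close> by auto
    qed
    moreover have "y \<le> y1 - (1 - a) * T" "0 \<le> (1 - a) * T"
      using descent[of "t\<^sub>0 + T"] q \<open>0 \<le> T\<close> assms(2) by simp_all
    ultimately have "(x2, y2) + T *\<^sub>R rel_velocity a (pi / 2) \<in> cball 0 R"
      unfolding down vertical_in using \<open>y1 \<le> y2\<close> by (simp add: abs_le_iff)
    then have "stays_in_disk a R (\<lambda>_. pi / 2) t\<^sub>0 (x2, y2) T"
      by (rule stays_in_disk_const_heading[OF \<open>0 \<le> T\<close> p2_in])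
    then show ?thesis
      unfolding p2 by (intro bexI[of _ "\<lambda>_. pi / 2"]) simp_all
  qed
qed

lemma contact_chord_rear_quarter:
  assumes "0 < R" and l: "- pi \<le> l1" "l1 < l2" "l2 \<le> - (pi / 2)" and "- a < cos l1"
  defines "d \<equiv> contact_point R l1 - contact_point R l2"
  shows "snd d < 0" and "(1 - a\<^sup>2) * (fst d)\<^sup>2 \<le> a\<^sup>2 * (snd d)\<^sup>2"
proof -
  define m h where "m = (l1 + l2) / 2" and "h = (l2 - l1) / 2"
  define k where "k = 2 * R * sin h"
  have "0 < sin h"
    unfolding h_def using l by (intro sin_gt_zero) auto
  with assms(1) have "0 < k"
    unfolding k_def by simp
  have "0 < sin (- m)"
    unfolding m_def using l by (intro sin_gt_zero) (auto simp: field_simps)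
  then have "sin m < 0" by simp
  have "cos l1 \<le> cos m" "cos m \<le> 0"
    unfolding m_def using l cos_monotone_minus_pi_0'[of l1 "(l1 + l2) / 2"]
      cos_monotone_minus_pi_0'[of "(l1 + l2) / 2" "- (pi / 2)"] by auto
  with \<open>- a < cos l1\<close> have "(cos m)\<^sup>2 \<le> a\<^sup>2"
    by (intro abs_le_square_iff[THEN iffD1]) auto
  have "fst d = - (R * (sin l2 - sin l1))"
    unfolding d_def contact_point_def by (simp add: algebra_simps)
  also have "\<dots> = - k * cos m"
    unfolding sin_diff_sin k_def m_def h_def by (simp add: add.commute)
  finally have dx: "fst d = - k * cos m" .
  have "snd d = R * (cos l1 - cos l2)"
    unfolding d_def contact_point_def by (simp add: algebra_simps)
  also have "\<dots> = k * sin m"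
    unfolding cos_diff_cos k_def m_def h_def by simp
  finally have dy: "snd d = k * sin m" .
  show "snd d < 0"
    unfolding dy using \<open>0 < k\<close> \<open>sin m < 0\<close> by (simp add: mult_pos_neg)
  have "(1 - a\<^sup>2) * (cos m)\<^sup>2 \<le> a\<^sup>2 * (sin m)\<^sup>2"
    using \<open>(cos m)\<^sup>2 \<le> a\<^sup>2\<close> by (simp add: sin_squared_eq algebra_simps)
  then have "k\<^sup>2 * ((1 - a\<^sup>2) * (cos m)\<^sup>2) \<le> k\<^sup>2 * (a\<^sup>2 * (sin m)\<^sup>2)"
    by (intro mult_left_mono) auto
  then show "(1 - a\<^sup>2) * (fst d)\<^sup>2 \<le> a\<^sup>2 * (snd d)\<^sup>2"
    unfolding dx dy by (simp add: power_mult_distrib algebra_simps)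
qed

lemma survival_transfers_rear:
  fixes \<psi> :: "real \<Rightarrow> real"
  assumes "0 < a" and "a < 1" and "0 < R"
    and l: "- pi \<le> l1" "l1 \<le> l2" "l2 \<le> - (pi / 2)"
    and \<psi>: "\<psi> \<in> borel_measurable borel" and "0 \<le> T"
    and stays: "stays_in_disk a R \<psi> t\<^sub>0 (contact_point R l1) T"
  shows "\<exists>\<phi> \<in> borel_measurable borel. stays_in_disk a R \<phi> t\<^sub>0 (contact_point R l2) T"
proof (cases "T = 0 \<or> l1 = l2")
  case True
  then show ?thesis
  proof
    assume "T = 0"
    moreover have "stays_in_disk a R (\<lambda>_. 0) t\<^sub>0 (contact_point R l2) 0"
      using assms(3) by (simp add: stays_in_disk_def)
    ultimately show ?thesis
      by (intro bexI[of _ "\<lambda>_. 0"]) simp_all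
  qed (use \<psi> stays in blast)
next
  case False
  then have "0 < T" "l1 < l2"
    using \<open>0 \<le> T\<close> l by auto
  let ?p1 = "contact_point R l1" and ?p2 = "contact_point R l2"
  have "- a < cos l1"
  proof (rule ccontr)
    assume "\<not> - a < cos l1"
    then have "R * cos l1 \<le> R * - a"
      using assms(3) by (intro mult_left_mono) auto
    moreover have "norm ?p1 = R" "snd ?p1 = R * cos l1"
      using assms(3) by (simp_all add: contact_point_def[of R l1, THEN arg_cong[where f=snd]])
    ultimately have "snd ?p1 \<le> - a * norm ?p1"
      by (simp add: algebra_simps)
    then have "norm ?p1 < norm (rel_pos a \<psi> t\<^sub>0 ?p1 (t\<^sub>0 + T))"
      using norm_lt_norm_rel_pos[OF \<psi> _ assms(2)] assms(1) \<open>0 < T\<close> by simp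
    moreover have "rel_pos a \<psi> t\<^sub>0 ?p1 (t\<^sub>0 + T) \<in> cball 0 R"
      using stays \<open>0 \<le> T\<close> by (simp add: stays_in_disk_def)
    ultimately show False
      using assms(3) by simp
  qed
  then obtain \<tau> c where "0 < \<tau>" and "?p1 - ?p2 = \<tau> *\<^sub>R rel_velocity a c"
    using exists_heading_for_displacement[OF assms(1,2)]
      contact_chord_rear_quarter[OF assms(3) l(1) \<open>l1 < l2\<close> l(3)] by blast
  then have meet: "?p2 + \<tau> *\<^sub>R rel_velocity a c = rel_pos a \<psi> t\<^sub>0 ?p1 (t\<^sub>0 + 0)"
    by (simp add: algebra_simps)
  have "?p2 \<in> cball 0 R"
    using assms(3) by simp
  with \<open>0 < \<tau>\<close> show ?thesis
    using survival_transfers_by_catching_up[OF \<psi> order_refl \<open>0 \<le> T\<close> _ _ meet stays] by simp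
qed

lemma exit_time_reflect:
  "exit_time a R t2 yT2 (- l) (\<lambda>t. pi - \<psi> t) = exit_time a R t2 yT2 l \<psi>"
proof -
  have "integral {t2..t} (\<lambda>s. a * cos (pi - \<psi> s)) = - integral {t2..t} (\<lambda>s. a * cos (\<psi> s))" for t
    by (simp add: integral_neg[symmetric])
  then show ?thesis
    unfolding exit_time_def obs_x_def obs_y_def by (simp add: power2_eq_square algebra_simps)
qed

lemma V_neg_le:
  assumes "0 \<le> a" and "a < 1" and "0 \<le> R"
  shows "V a R t2 yT2 (- l) \<le> V a R t2 yT2 l"
  unfolding V_def
proof (rule cSup_least)
  have "(\<lambda>_. 0) \<in> borel_measurable borel" by simp
  then show "{exit_time a R t2 yT2 (- l) \<psi> - t2 | \<psi>. \<psi> \<in> borel_measurable borel} \<noteq> {}"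
    by blast
  fix x assume "x \<in> {exit_time a R t2 yT2 (- l) \<psi> - t2 | \<psi>. \<psi> \<in> borel_measurable borel}"
  then obtain \<psi> :: "real \<Rightarrow> real" where "\<psi> \<in> borel_measurable borel"
    and x: "x = exit_time a R t2 yT2 (- l) \<psi> - t2" by blast
  then have \<psi>': "(\<lambda>t. pi - \<psi> t) \<in> borel_measurable borel" by measurable
  have "x = first_exit a R (\<lambda>t. pi - \<psi> t) t2 (contact_point R l) - t2"
    using exit_time_reflect[of a R t2 yT2 "- l" \<psi>] exit_time_eq_first_exit[OF \<psi>' assms(3)] x by simp
  also have "\<dots> \<le> Sup {exit_time a R t2 yT2 l \<psi> - t2 | \<psi>. \<psi> \<in> borel_measurable borel}"
    using first_exit_le_V[OF \<psi>' assms] unfolding V_def .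
  finally show "x \<le> Sup {exit_time a R t2 yT2 l \<psi> - t2 | \<psi>. \<psi> \<in> borel_measurable borel}" .
qed

lemma V_neg:
  assumes "0 \<le> a" and "a < 1" and "0 \<le> R"
  shows "V a R t2 yT2 (- l) = V a R t2 yT2 l"
  using V_neg_le[OF assms, of t2 yT2 l] V_neg_le[OF assms, of t2 yT2 "- l"] by simp

lemma V_mono_left_half:
  assumes "0 < a" and "a < 1" and "0 < R" and "- pi \<le> l1" and "l1 \<le> l2" and "l2 \<le> 0"
  shows "V a R t2 yT2 l1 \<le> V a R t2 yT2 l2"
proof -
  have front: "V a R t2 yT2 u \<le> V a R t2 yT2 v" if "- (pi / 2) \<le> u" "u \<le> v" "v \<le> 0" for u v
    using assms(1-3) that
    by (intro V_le_V_if_survival_transfers survival_transfers_front) auto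
  have rear: "V a R t2 yT2 u \<le> V a R t2 yT2 v" if "- pi \<le> u" "u \<le> v" "v \<le> - (pi / 2)" for u v
    using assms(1-3) that
    by (intro V_le_V_if_survival_transfers survival_transfers_rear) auto
  consider "l2 \<le> - (pi / 2)" | "- (pi / 2) \<le> l1" | "l1 \<le> - (pi / 2)" "- (pi / 2) \<le> l2"
    by linarith
  then show ?thesis
  proof cases
    case 3
    then show ?thesis
      using front[of "- (pi / 2)" l2] rear[of l1 "- (pi / 2)"] assms(4,6) by linarith
  qed (use front rear assms(4-6) in auto)
qed

theorem lemma3:
  fixes \<alpha> R t2 yT2 :: real
  assumes "0 < \<alpha>" and "\<alpha> < 1" and "0 < R"
  shows "monotone_on {-pi..0} (\<le>) (\<le>) (V \<alpha> R t2 yT2)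
       \<and> monotone_on {0..pi} (\<le>) (\<ge>) (V \<alpha> R t2 yT2)
       \<and> (\<forall>lam\<in>{-pi..pi}. V \<alpha> R t2 yT2 lam \<le> V \<alpha> R t2 yT2 0)"
proof -
  have left: "V \<alpha> R t2 yT2 l1 \<le> V \<alpha> R t2 yT2 l2" if "- pi \<le> l1" "l1 \<le> l2" "l2 \<le> 0" for l1 l2
    using V_mono_left_half[OF assms that] .
  have right: "V \<alpha> R t2 yT2 l2 \<le> V \<alpha> R t2 yT2 l1" if "0 \<le> l1" "l1 \<le> l2" "l2 \<le> pi" for l1 l2
    using left[of "- l2" "- l1"] that V_neg[of \<alpha> R t2 yT2] assms by simp
  have "V \<alpha> R t2 yT2 lam \<le> V \<alpha> R t2 yT2 0" if "lam \<in> {-pi..pi}" for lam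
    using left[of lam 0] right[of 0 lam] that by (cases "lam \<le> 0") auto
  with left right show ?thesis
    unfolding monotone_on_def by auto
qed

end
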